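(* Let $G$ be a finite group, $\mathcal H=(E,p,B,\tau)$ a $G$-Hilbert bundle and $\Gamma=\{\gamma_{b',b}\}_{b,b'\in B}$ a $G$-equivariant connection on $\mathcal H$ with multiplier $\mu_\Gamma$. Fix $b\in B$ and put $V_b=E_b$ (as a Hilbert space) and, for $g\in G$ and $v\in V_b$, $$\rho^b_g(v)=\gamma_{b,\tau^B_g(b)}\big(\tau^E_g(v)\big).$$ Then each $\rho^b_g$ is a unitary operator on $V_b$ and $(V_b,\rho^b)$ is a projective unitary representation of $G$ satisfying $\rho^b_g\rho^b_h=c(g,h)\,\rho^b_{gh}$ for all $g,h\in G$, with 2-cocycle $$c(g,h)=\mu_\Gamma(b,\ g.b,\ gh.b)\qquad(g,h\in G).$$ In particular, if $\Gamma$ is flat, then $\rho^b$ is a true (linear) representation of $G$.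
   Context: A $G$-Hilbert bundle $\mathcal H=(E,p,B,\tau)$ consists of finite sets $E$ (total space) and $B$ (base), a surjection $p:E\to B$, and actions $\tau=(\tau^E,\tau^B)$ of the finite group $G$ on $E$ and on $B$ with $p\circ\tau^E_g=\tau^B_g\circ p$ for all $g\in G$; each fiber $E_b=p^{-1}(b)$ is a finite-dimensional complex Hilbert space with inner product $\langle\ ,\ \rangle$, and each $\tau^E_g$ restricts to a unitary linear map $E_b\to E_{g.b}$. One writes $g.v=\tau^E_g(v)$, $g.b=\tau^B_g(b)$. A $G$-equivariant connection on $\mathcal H$ is a family $\Gamma=\{\gamma_{b',b}:E_b\to E_{b'}\}_{b,b'\in B}$ of linear isomorphisms such that for all $b,b',b''\in B$, $g\in G$: (i) $\langle\gamma_{b',b}f,\gamma_{b',b}h\rangle=\langle f,h\rangle$ for $f,h\in E_b$; (ii) $\langle\gamma_{b',b}f,h\rangle=\langle f,\gamma_{b,b'}h\rangle$ for $f\in E_b$, $h\in E_{b'}$; (iii) $\gamma_{b,b'}\circ\gamma_{b',b}=\gamma_{b,b}=\mathrm{id}_{E_b}$; (iv) $\gamma_{b'',b'}\circ\gamma_{b',b}=\mu_\Gamma(b'',b',b)\,\gamma_{b'',b}$ for a function $\mu_\Gamma:B\times B\times B\to\mathbb C^\times$ (the multiplier of $\Gamma$); (v) $\tau_g\circ\gamma_{b',b}=\gamma_{g.b',g.b}\circ\tau_g$. The connection is flat if $\mu_\Gamma\equiv1$. *)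

theory Defs
  imports "HOL-Algebra.Group" "Jordan_Normal_Form.Matrix"
begin

text \<open>Fibres: the fibre over a base point b is the finite-dimensional complex
Hilbert space C^(n b) (carrier_vec (n b)) with inner product f \<bullet>c h
(linear in the first, conjugate-linear in the second argument).
The total space is E = Sigma B (fibre), p = fst.
The action on E is (b,v) maps to (TB g b, T g b v).\<close>

abbreviation fibre :: "('b \<Rightarrow> nat) \<Rightarrow> 'b \<Rightarrow> complex vec set" where
  "fibre n b \<equiv> carrier_vec (n b)"

definition lin_map :: "complex vec set \<Rightarrow> complex vec set \<Rightarrow> (complex vec \<Rightarrow> complex vec) \<Rightarrow> bool" where
  "lin_map V W f \<longleftrightarrow> (\<forall>v\<in>V. f v \<in> W) \<and>
     (\<forall>v\<in>V. \<forall>w\<in>V. f (v + w) = f v + f w) \<and>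
     (\<forall>a. \<forall>v\<in>V. f (a \<cdot>\<^sub>v v) = a \<cdot>\<^sub>v f v)"

definition unitary_map :: "complex vec set \<Rightarrow> complex vec set \<Rightarrow> (complex vec \<Rightarrow> complex vec) \<Rightarrow> bool" where
  "unitary_map V W f \<longleftrightarrow> lin_map V W f \<and> bij_betw f V W \<and>
     (\<forall>v\<in>V. \<forall>w\<in>V. f v \<bullet>c f w = v \<bullet>c w)"

definition G_Hilbert_bundle ::
  "('g, 'm) monoid_scheme \<Rightarrow> 'b set \<Rightarrow> ('b \<Rightarrow> nat) \<Rightarrow>
   ('g \<Rightarrow> 'b \<Rightarrow> 'b) \<Rightarrow> ('g \<Rightarrow> 'b \<Rightarrow> complex vec \<Rightarrow> complex vec) \<Rightarrow> bool" where
  "G_Hilbert_bundle G B n TB T \<longleftrightarrow>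
     group G \<and> finite (carrier G) \<and> finite B \<and>
     (\<forall>g\<in>carrier G. \<forall>b\<in>B. TB g b \<in> B) \<and>
     (\<forall>b\<in>B. TB \<one>\<^bsub>G\<^esub> b = b) \<and>
     (\<forall>g\<in>carrier G. \<forall>h\<in>carrier G. \<forall>b\<in>B. TB (g \<otimes>\<^bsub>G\<^esub> h) b = TB g (TB h b)) \<and>
     (\<forall>g\<in>carrier G. \<forall>b\<in>B. unitary_map (fibre n b) (fibre n (TB g b)) (T g b)) \<and>
     (\<forall>b\<in>B. \<forall>v\<in>fibre n b. T \<one>\<^bsub>G\<^esub> b v = v) \<and>
     (\<forall>g\<in>carrier G. \<forall>h\<in>carrier G. \<forall>b\<in>B. \<forall>v\<in>fibre n b.
        T (g \<otimes>\<^bsub>G\<^esub> h) b v = T g (TB h b) (T h b v))"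

definition G_equivariant_connection ::
  "('g, 'm) monoid_scheme \<Rightarrow> 'b set \<Rightarrow> ('b \<Rightarrow> nat) \<Rightarrow>
   ('g \<Rightarrow> 'b \<Rightarrow> 'b) \<Rightarrow> ('g \<Rightarrow> 'b \<Rightarrow> complex vec \<Rightarrow> complex vec) \<Rightarrow>
   ('b \<Rightarrow> 'b \<Rightarrow> complex vec \<Rightarrow> complex vec) \<Rightarrow> ('b \<Rightarrow> 'b \<Rightarrow> 'b \<Rightarrow> complex) \<Rightarrow> bool" where
  "G_equivariant_connection G B n TB T \<gamma> \<mu> \<longleftrightarrow>
     (\<forall>b\<in>B. \<forall>b'\<in>B. lin_map (fibre n b) (fibre n b') (\<gamma> b' b) \<and>
                     bij_betw (\<gamma> b' b) (fibre n b) (fibre n b')) \<and>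
     (\<forall>b\<in>B. \<forall>b'\<in>B. \<forall>f\<in>fibre n b. \<forall>h\<in>fibre n b. \<gamma> b' b f \<bullet>c \<gamma> b' b h = f \<bullet>c h) \<and>
     (\<forall>b\<in>B. \<forall>b'\<in>B. \<forall>f\<in>fibre n b. \<forall>h\<in>fibre n b'. \<gamma> b' b f \<bullet>c h = f \<bullet>c \<gamma> b b' h) \<and>
     (\<forall>b\<in>B. \<forall>b'\<in>B. \<forall>f\<in>fibre n b. \<gamma> b b' (\<gamma> b' b f) = \<gamma> b b f \<and> \<gamma> b b f = f) \<and>
     (\<forall>b\<in>B. \<forall>b'\<in>B. \<forall>b''\<in>B. \<mu> b'' b' b \<noteq> 0 \<and>
        (\<forall>f\<in>fibre n b. \<gamma> b'' b' (\<gamma> b' b f) = \<mu> b'' b' b \<cdot>\<^sub>v \<gamma> b'' b f)) \<and>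
     (\<forall>g\<in>carrier G. \<forall>b\<in>B. \<forall>b'\<in>B. \<forall>f\<in>fibre n b.
        T g b' (\<gamma> b' b f) = \<gamma> (TB g b') (TB g b) (T g b f))"

definition flat_connection :: "'b set \<Rightarrow> ('b \<Rightarrow> 'b \<Rightarrow> 'b \<Rightarrow> complex) \<Rightarrow> bool" where
  "flat_connection B \<mu> \<longleftrightarrow> (\<forall>b\<in>B. \<forall>b'\<in>B. \<forall>b''\<in>B. \<mu> b'' b' b = 1)"

definition proj_unitary_rep ::
  "('g, 'm) monoid_scheme \<Rightarrow> complex vec set \<Rightarrow> ('g \<Rightarrow> complex vec \<Rightarrow> complex vec) \<Rightarrow>
   ('g \<Rightarrow> 'g \<Rightarrow> complex) \<Rightarrow> bool" where
  "proj_unitary_rep G V \<rho> c \<longleftrightarrow>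
     (\<forall>g\<in>carrier G. unitary_map V V (\<rho> g)) \<and>
     (\<forall>g\<in>carrier G. \<forall>h\<in>carrier G. c g h \<noteq> 0 \<and>
        (\<forall>v\<in>V. \<rho> g (\<rho> h v) = c g h \<cdot>\<^sub>v \<rho> (g \<otimes>\<^bsub>G\<^esub> h) v))"

definition unitary_rep ::
  "('g, 'm) monoid_scheme \<Rightarrow> complex vec set \<Rightarrow> ('g \<Rightarrow> complex vec \<Rightarrow> complex vec) \<Rightarrow> bool" where
  "unitary_rep G V \<rho> \<longleftrightarrow>
     (\<forall>g\<in>carrier G. unitary_map V V (\<rho> g)) \<and>
     (\<forall>v\<in>V. \<rho> \<one>\<^bsub>G\<^esub> v = v) \<and>
     (\<forall>g\<in>carrier G. \<forall>h\<in>carrier G. \<forall>v\<in>V. \<rho> g (\<rho> h v) = \<rho> (g \<otimes>\<^bsub>G\<^esub> h) v)"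

end

theory Submission
  imports Defs
begin

text \<open>
  The operator rho_b(g) = gamma(b, g.b) o tau_g maps the
  fibre E_b unitarily to E_{g.b} and back to E_b, so it is a unitary operator on E_b.
  For the product rule, move tau_g past gamma(b, h.b) using equivariance, which turns
  gamma(b, h.b) into gamma(g.b, gh.b); combine tau_g o tau_h = tau_{gh}; and finally
  compose gamma(b, g.b) o gamma(g.b, gh.b) = mu(b, g.b, gh.b) gamma(b, gh.b) by the
  definition of the multiplier.
  When the connection is flat, mu = 1, and rho_b(1) = gamma(b,b) = id, so rho_b is a
  genuine representation.
\<close>

lemma unitary_map_comp:
  assumes "unitary_map U V f" and "unitary_map V W g"
  shows "unitary_map U W (\<lambda>v. g (f v))"
  using assms bij_betw_trans[of f U V g W, unfolded comp_def]
  unfolding unitary_map_def lin_map_def by simp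

lemma unitary_map_in:
  assumes "unitary_map V W f" and "v \<in> V"
  shows "f v \<in> W"
  using assms unfolding unitary_map_def lin_map_def by blast

locale bundle_with_connection =
  fixes G :: "('g, 'm) monoid_scheme" and B :: "'b set" and n :: "'b \<Rightarrow> nat"
    and TB :: "'g \<Rightarrow> 'b \<Rightarrow> 'b" and T :: "'g \<Rightarrow> 'b \<Rightarrow> complex vec \<Rightarrow> complex vec"
    and \<gamma> :: "'b \<Rightarrow> 'b \<Rightarrow> complex vec \<Rightarrow> complex vec" and \<mu> :: "'b \<Rightarrow> 'b \<Rightarrow> 'b \<Rightarrow> complex"
  assumes is_bundle: "G_Hilbert_bundle G B n TB T"
    and is_connection: "G_equivariant_connection G B n TB T \<gamma> \<mu>"
begin

lemma action_closed: "g \<in> carrier G \<Longrightarrow> c \<in> B \<Longrightarrow> TB g c \<in> B"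
  using is_bundle unfolding G_Hilbert_bundle_def by blast

lemma action_one: "c \<in> B \<Longrightarrow> TB \<one>\<^bsub>G\<^esub> c = c"
  using is_bundle unfolding G_Hilbert_bundle_def by blast

lemma action_mult:
  "g \<in> carrier G \<Longrightarrow> h \<in> carrier G \<Longrightarrow> c \<in> B \<Longrightarrow> TB (g \<otimes>\<^bsub>G\<^esub> h) c = TB g (TB h c)"
  using is_bundle unfolding G_Hilbert_bundle_def by blast

lemma lift_unitary:
  "g \<in> carrier G \<Longrightarrow> c \<in> B \<Longrightarrow> unitary_map (fibre n c) (fibre n (TB g c)) (T g c)"
  using is_bundle unfolding G_Hilbert_bundle_def by blast

lemma lift_one: "c \<in> B \<Longrightarrow> v \<in> fibre n c \<Longrightarrow> T \<one>\<^bsub>G\<^esub> c v = v"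
  using is_bundle unfolding G_Hilbert_bundle_def by blast

lemma lift_mult:
  "g \<in> carrier G \<Longrightarrow> h \<in> carrier G \<Longrightarrow> c \<in> B \<Longrightarrow> v \<in> fibre n c \<Longrightarrow>
   T (g \<otimes>\<^bsub>G\<^esub> h) c v = T g (TB h c) (T h c v)"
  using is_bundle unfolding G_Hilbert_bundle_def by blast

lemma product_closed: "g \<in> carrier G \<Longrightarrow> h \<in> carrier G \<Longrightarrow> c \<in> B \<Longrightarrow> TB (g \<otimes>\<^bsub>G\<^esub> h) c \<in> B"
  using action_closed action_mult by simp

lemma transport_unitary:
  assumes "c \<in> B" and "c' \<in> B"
  shows "unitary_map (fibre n c) (fibre n c') (\<gamma> c' c)"
proof -
  note conn = is_connection[unfolded G_equivariant_connection_def]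
  have "lin_map (fibre n c) (fibre n c') (\<gamma> c' c) \<and> bij_betw (\<gamma> c' c) (fibre n c) (fibre n c')"
    using conn[THEN conjunct1] assms by blast
  moreover have "\<forall>f\<in>fibre n c. \<forall>h\<in>fibre n c. \<gamma> c' c f \<bullet>c \<gamma> c' c h = f \<bullet>c h"
    using conn[THEN conjunct2, THEN conjunct1] assms by blast
  ultimately show ?thesis unfolding unitary_map_def by blast
qed

lemma transport_id: "c \<in> B \<Longrightarrow> f \<in> fibre n c \<Longrightarrow> \<gamma> c c f = f"
  using is_connection unfolding G_equivariant_connection_def by blast

lemma transport_compose:
  "c \<in> B \<Longrightarrow> c' \<in> B \<Longrightarrow> c'' \<in> B \<Longrightarrow> f \<in> fibre n c \<Longrightarrow>
   \<gamma> c'' c' (\<gamma> c' c f) = \<mu> c'' c' c \<cdot>\<^sub>v \<gamma> c'' c f"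
  using is_connection unfolding G_equivariant_connection_def by blast

lemma multiplier_nonzero: "c \<in> B \<Longrightarrow> c' \<in> B \<Longrightarrow> c'' \<in> B \<Longrightarrow> \<mu> c'' c' c \<noteq> 0"
  using is_connection unfolding G_equivariant_connection_def by blast

lemma transport_equivariant:
  "g \<in> carrier G \<Longrightarrow> c \<in> B \<Longrightarrow> c' \<in> B \<Longrightarrow> f \<in> fibre n c \<Longrightarrow>
   T g c' (\<gamma> c' c f) = \<gamma> (TB g c') (TB g c) (T g c f)"
  using is_connection unfolding G_equivariant_connection_def by blast

definition fibre_rep :: "'b \<Rightarrow> 'g \<Rightarrow> complex vec \<Rightarrow> complex vec" where
  "fibre_rep b = (\<lambda>g v. \<gamma> b (TB g b) (T g b v))"

text \<open>rho_b(g) is the composite of the unitaries tau_g : E_b \<rightarrow> E_{g.b} and gamma(b, g.b).\<close>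
lemma fibre_rep_unitary:
  assumes "b \<in> B" and "g \<in> carrier G"
  shows "unitary_map (fibre n b) (fibre n b) (fibre_rep b g)"
  unfolding fibre_rep_def
  using unitary_map_comp[OF lift_unitary transport_unitary] action_closed assms by blast

lemma fibre_rep_mult:
  assumes b: "b \<in> B" and g: "g \<in> carrier G" and h: "h \<in> carrier G" and v: "v \<in> fibre n b"
  shows "fibre_rep b g (fibre_rep b h v) =
         \<mu> b (TB g b) (TB (g \<otimes>\<^bsub>G\<^esub> h) b) \<cdot>\<^sub>v fibre_rep b (g \<otimes>\<^bsub>G\<^esub> h) v"
proof -
  let ?gh = "g \<otimes>\<^bsub>G\<^esub> h"
  have hb: "TB h b \<in> B" and gb: "TB g b \<in> B" and ghb: "TB ?gh b \<in> B"
    using action_closed product_closed b g h by auto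
  have hv: "T h b v \<in> fibre n (TB h b)"
    using unitary_map_in[OF lift_unitary[OF h b] v] .
  have lift_gh: "T ?gh b v = T g (TB h b) (T h b v)" and base_gh: "TB ?gh b = TB g (TB h b)"
    using lift_mult action_mult b g h v by auto
  have ghv: "T ?gh b v \<in> fibre n (TB ?gh b)"
    using unitary_map_in[OF lift_unitary[OF g hb] hv] lift_gh base_gh by simp
  have "fibre_rep b g (fibre_rep b h v) = \<gamma> b (TB g b) (T g b (\<gamma> b (TB h b) (T h b v)))"
    by (simp add: fibre_rep_def)
  also have "\<dots> = \<gamma> b (TB g b) (\<gamma> (TB g b) (TB ?gh b) (T ?gh b v))"
    using transport_equivariant[OF g hb b hv] lift_gh base_gh by simp
  also have "\<dots> = \<mu> b (TB g b) (TB ?gh b) \<cdot>\<^sub>v \<gamma> b (TB ?gh b) (T ?gh b v)"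
    using transport_compose[OF ghb gb b ghv] .
  finally show ?thesis by (simp add: fibre_rep_def)
qed

lemma fibre_rep_one:
  assumes "b \<in> B" and "v \<in> fibre n b"
  shows "fibre_rep b \<one>\<^bsub>G\<^esub> v = v"
  using assms by (simp add: fibre_rep_def action_one lift_one transport_id)

lemma fibre_rep_projective:
  assumes b: "b \<in> B"
  shows "proj_unitary_rep G (fibre n b) (fibre_rep b) (\<lambda>g h. \<mu> b (TB g b) (TB (g \<otimes>\<^bsub>G\<^esub> h) b))"
  unfolding proj_unitary_rep_def
  using fibre_rep_unitary fibre_rep_mult multiplier_nonzero action_closed product_closed b
  by simp

lemma fibre_rep_linear_if_flat:
  assumes b: "b \<in> B" and flat: "flat_connection B \<mu>"
  shows "unitary_rep G (fibre n b) (fibre_rep b)"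
proof -
  have "fibre_rep b g (fibre_rep b h v) = fibre_rep b (g \<otimes>\<^bsub>G\<^esub> h) v"
    if "g \<in> carrier G" "h \<in> carrier G" "v \<in> fibre n b" for g h v
    using fibre_rep_mult[OF b that] flat action_closed product_closed b that
    unfolding flat_connection_def by simp
  then show ?thesis
    unfolding unitary_rep_def using fibre_rep_unitary fibre_rep_one b by simp
qed

end

theorem mainTheorem1:
  fixes G :: "('g, 'm) monoid_scheme" and B :: "'b set" and n :: "'b \<Rightarrow> nat"
    and TB :: "'g \<Rightarrow> 'b \<Rightarrow> 'b" and T :: "'g \<Rightarrow> 'b \<Rightarrow> complex vec \<Rightarrow> complex vec"
    and \<gamma> :: "'b \<Rightarrow> 'b \<Rightarrow> complex vec \<Rightarrow> complex vec" and \<mu> :: "'b \<Rightarrow> 'b \<Rightarrow> 'b \<Rightarrow> complex"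
    and b :: 'b
  assumes "G_Hilbert_bundle G B n TB T"
    and "G_equivariant_connection G B n TB T \<gamma> \<mu>"
    and "b \<in> B"
  shows "(\<forall>g\<in>carrier G. unitary_map (fibre n b) (fibre n b) (\<lambda>v. \<gamma> b (TB g b) (T g b v))) \<and>
         proj_unitary_rep G (fibre n b) (\<lambda>g v. \<gamma> b (TB g b) (T g b v))
           (\<lambda>g h. \<mu> b (TB g b) (TB (g \<otimes>\<^bsub>G\<^esub> h) b)) \<and>
         (flat_connection B \<mu> \<longrightarrow> unitary_rep G (fibre n b) (\<lambda>g v. \<gamma> b (TB g b) (T g b v)))"
proof -
  interpret bundle_with_connection G B n TB T \<gamma> \<mu>
    using assms(1,2) by unfold_locales
  have rho: "fibre_rep b = (\<lambda>g v. \<gamma> b (TB g b) (T g b v))"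
    by (simp add: fibre_rep_def)
  show ?thesis
    using fibre_rep_unitary[OF assms(3)] fibre_rep_projective[OF assms(3)]
      fibre_rep_linear_if_flat[OF assms(3)]
    unfolding rho by blast
qed

end
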